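(* Consider Algorithm SS-SQP (described in the context) under the standing assumptions (A1), (A2). There exists a constant $\kappa_l>0$ such that for all $k\in\mathbb{N}$, $$\Delta l(x_k,\bar\tau_k,\bar g_k,\bar d_k)\ge\kappa_l\bar\tau_k(\|\bar d_k\|^2+\|c_k\|).$$
   Context: Problem: $\min_{x\in\mathbb{R}^n}f(x)$ s.t. $c(x)=0$ with $f,c$ continuously differentiable, $c:\mathbb{R}^n\to\mathbb{R}^m$, $m\le n$; $c_k=c(x_k)$, $J_k=\nabla c(x_k)^T$; $\|\cdot\|$ Euclidean norm. $\Delta l(x,\tau,g,d)=-\tau g^Td+\|c(x)\|_1$. Standing assumption (A1): there is an open convex set $\mathcal{X}$ containing all iterates and trial iterates; $f$ bounded below, $\nabla f$ $L$-Lipschitz and bounded, $c$ bounded, each $\nabla c_i$ Lipschitz and bounded on $\mathcal{X}$; singular values of $\nabla c(x)^T$ bounded away from zero on $\mathcal{X}$. (A2): $H_k$ symmetric, chosen independently of $\bar g_k$, $\|H_k\|\le\kappa_H$, $u^TH_ku\ge\zeta\|u\|^2$ for $u\in\mathrm{Null}(J_k)$, $\kappa_H,\zeta>0$. Algorithm SS-SQP: inputs $x_0$, $\bar\tau_{-1}>0$, $\alpha_{\max}\in(0,1]$, $\alpha_0\in(0,\alpha_{\max}]$, $\epsilon_f\ge0$, $\gamma,\theta,\sigma,\epsilon_\tau\in(0,1)$. At iteration $k$: random gradient estimate $\bar g_k$; solve $\begin{bmatrix}H_k & J_k^T\\ J_k&0\end{bmatrix}\begin{bmatrix}\bar d_k\\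 \bar y_k\end{bmatrix}=-\begin{bmatrix}\bar g_k\\ c_k\end{bmatrix}$; $\bar\tau_k^{\rm trial}=\infty$ if $\bar g_k^T\bar d_k+\max\{\bar d_k^TH_k\bar d_k,0\}\le0$, else $(1-\sigma)\|c_k\|_1/(\bar g_k^T\bar d_k+\max\{\bar d_k^TH_k\bar d_k,0\})$; $\bar\tau_k=\bar\tau_{k-1}$ if $\bar\tau_{k-1}\le\bar\tau_k^{\rm trial}$, else $\min\{(1-\epsilon_\tau)\bar\tau_{k-1},\bar\tau_k^{\rm trial}\}$; $x_k^+=x_k+\alpha_k\bar d_k$; with objective estimates $\bar f$ and $\bar\phi(x,\tau;\xi)=\tau\bar f(x;\xi)+\|c(x)\|_1$, set $x_{k+1}=x_k^+$, $\alpha_{k+1}=\min\{\alpha_{\max},\alpha_k/\gamma\}$ if $\bar\phi(x_k^+,\bar\tau_k;\xi_k^+)\le\bar\phi(x_k,\bar\tau_k;\xi_k^0)-\alpha_k\theta\Delta l(x_k,\bar\tau_k,\bar g_k,\bar d_k)+2\bar\tau_k\epsilon_f$, else $x_{k+1}=x_k$, $\alpha_{k+1}=\gamma\alpha_k$. *)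

theory Defs
  imports "HOL-Analysis.Analysis"
begin

definition l1norm :: "real^'m \<Rightarrow> real" where
  "l1norm v = (\<Sum>i\<in>UNIV. \<bar>v $ i\<bar>)"

definition Delta_l :: "(real^'n \<Rightarrow> real^'m) \<Rightarrow> real^'n \<Rightarrow> real \<Rightarrow> real^'n \<Rightarrow> real^'n \<Rightarrow> real" where
  "Delta_l c x tau g d = - tau * (g \<bullet> d) + l1norm (c x)"

definition tau_trial :: "real \<Rightarrow> real \<Rightarrow> real \<Rightarrow> ereal" where
  "tau_trial sgm cnorm1 den = (if den \<le> 0 then \<infinity> else ereal ((1 - sgm) * cnorm1 / den))"

definition tau_update :: "real \<Rightarrow> real \<Rightarrow> ereal \<Rightarrow> real" where
  "tau_update eps_tau taup trial =
     (if ereal taup \<le> trial then taup else min ((1 - eps_tau) * taup) (real_of_ereal trial))"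

text \<open>J z is the Jacobian (m x n) of c at z.
  fplus k, fzero k are the objective estimates f(x_k^+; xi_k^+) and f(x_k; xi_k^0).
  tau k is tau_bar_k (tau_m1 is tau_bar_{-1}).\<close>
definition ss_sqp ::
  "(real^'n \<Rightarrow> real^'m) \<Rightarrow> (real^'n \<Rightarrow> real^'n^'m) \<Rightarrow> real^'n \<Rightarrow> real \<Rightarrow> real \<Rightarrow> real \<Rightarrow> real
   \<Rightarrow> real \<Rightarrow> real \<Rightarrow> real \<Rightarrow> real
   \<Rightarrow> (nat \<Rightarrow> real) \<Rightarrow> (nat \<Rightarrow> real) \<Rightarrow> (nat \<Rightarrow> real^'n^'n) \<Rightarrow> (nat \<Rightarrow> real^'n)
   \<Rightarrow> (nat \<Rightarrow> real^'n) \<Rightarrow> (nat \<Rightarrow> real^'m) \<Rightarrow> (nat \<Rightarrow> real) \<Rightarrow> (nat \<Rightarrow> real) \<Rightarrow> (nat \<Rightarrow> real^'n) \<Rightarrow> bool"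
  where
  "ss_sqp c J x0 tau_m1 alpha_max alpha0 eps_f gamma theta sgm eps_tau
      fplus fzero H g d y tau alpha x \<longleftrightarrow>
    x 0 = x0 \<and> alpha 0 = alpha0 \<and>
    (\<forall>k.
      H k *v d k + transpose (J (x k)) *v y k = - g k \<and>
      J (x k) *v d k = - c (x k) \<and>
      tau k = tau_update eps_tau (if k = 0 then tau_m1 else tau (k - 1))
                (tau_trial sgm (l1norm (c (x k))) (g k \<bullet> d k + max (d k \<bullet> (H k *v d k)) 0)) \<and>
      (let xp = x k + alpha k *\<^sub>R d k in
        if tau k * fplus k + l1norm (c xp)
             \<le> tau k * fzero k + l1norm (c (x k))
                - alpha k * theta * Delta_l c (x k) (tau k) (g k) (d k) + 2 * tau k * eps_f
        then x (Suc k) = xp \<and> alpha (Suc k) = min alpha_max (alpha k / gamma)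
        else x (Suc k) = x k \<and> alpha (Suc k) = gamma * alpha k))"

end

theory Submission
  imports Defs
begin

text \<open>Since \<open>\<tau>\<^sub>k\<close> never exceeds its trial value,
  \<open>\<tau>\<^sub>k (g\<^sub>k\<^sup>T d\<^sub>k + max (d\<^sub>k\<^sup>T H\<^sub>k d\<^sub>k) 0) \<le> (1 - \<sigma>) \<parallel>c\<^sub>k\<parallel>\<^sub>1\<close>, i.e.
  \<open>\<Delta>l \<ge> \<tau>\<^sub>k max (d\<^sub>k\<^sup>T H\<^sub>k d\<^sub>k) 0 + \<sigma> \<parallel>c\<^sub>k\<parallel>\<^sub>1\<close>.
  Split \<open>d\<^sub>k = u + v\<close> with \<open>u\<close> in the null space of \<open>J\<^sub>k\<close> and \<open>v\<close> in the range of
  \<open>J\<^sub>k\<^sup>T\<close>. The constraint \<open>J\<^sub>k d\<^sub>k = -c\<^sub>k\<close> and the lower bound on the singular values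
  give \<open>\<parallel>v\<parallel> \<le> \<parallel>c\<^sub>k\<parallel>/s\<close>, and the curvature of \<open>H\<^sub>k\<close> on the null space bounds \<open>\<parallel>u\<parallel>\<^sup>2\<close>
  by \<open>d\<^sub>k\<^sup>T H\<^sub>k d\<^sub>k\<close> up to a multiple of \<open>\<parallel>v\<parallel>\<^sup>2\<close>. As \<open>c\<close> is bounded, this yields
  \<open>\<parallel>d\<^sub>k\<parallel>\<^sup>2 \<lesssim> max (d\<^sub>k\<^sup>T H\<^sub>k d\<^sub>k) 0 + \<parallel>c\<^sub>k\<parallel>\<close>, and since \<open>\<tau>\<^sub>k \<le> \<tau>\<^sub>-\<^sub>1\<close> both terms
  are dominated by \<open>\<Delta>l\<close>.\<close>

lemma inner_transpose_mult:
  fixes A :: "real^'n^'m"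
  shows "(transpose A *v w) \<bullet> z = w \<bullet> (A *v z)"
  by (metis dot_lmul_matrix transpose_transpose vector_transpose_matrix)

lemma null_range_decomposition:
  fixes A :: "real^'n^'m"
  obtains u w where "d = u + transpose A *v w" "A *v u = 0"
proof -
  let ?R = "range (\<lambda>w. transpose A *v w)"
  have span_R: "span ?R = ?R"
    by (metis span_UNIV span_linear_image matrix_vector_mul_linear)
  obtain v z where v: "v \<in> span ?R" and z_orth: "\<And>r. r \<in> span ?R \<Longrightarrow> orthogonal z r"
    and "d = v + z"
    using orthogonal_subspace_decomp_exists by blast
  moreover obtain w where "v = transpose A *v w"
    using v span_R by (metis imageE)
  ultimately have d: "d = z + transpose A *v w"
    by (simp add: add.commute)
  have "orthogonal z (transpose A *v (A *v z))"
    using z_orth span_R by (metis rangeI)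
  then have "(A *v z) \<bullet> (A *v z) = 0"
    by (metis orthogonal_def inner_commute inner_transpose_mult)
  then show thesis
    using that d by simp
qed

lemma norm_transpose_range_le:
  fixes A :: "real^'n^'m"
  assumes sv: "\<And>v. s * norm v \<le> norm (transpose A *v v)"
  shows "s * norm (transpose A *v w) \<le> norm (A *v (transpose A *v w))"
proof (cases "w = 0")
  case False
  let ?v = "transpose A *v w"
  have "s * norm w * norm ?v \<le> norm ?v * norm ?v"
    using mult_right_mono[OF sv norm_ge_zero] .
  also have "\<dots> = w \<bullet> (A *v ?v)"
    unfolding power2_eq_square[symmetric] power2_norm_eq_inner by (rule inner_transpose_mult)
  also have "\<dots> \<le> norm w * norm (A *v ?v)"
    by (rule norm_cauchy_schwarz)
  finally show ?thesis
    using False by (simp add: mult_ac mult_le_cancel_left_pos)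
qed simp

lemma norm_sq_le_curvature:
  fixes h :: "'a::real_inner \<Rightarrow> 'a"
  assumes "linear h" "\<zeta> > 0" "\<kappa> \<ge> 0" "\<And>z. norm (h z) \<le> \<kappa> * norm z"
    and curv: "\<zeta> * (norm u)\<^sup>2 \<le> u \<bullet> h u"
  shows "(norm (u + v))\<^sup>2
    \<le> 4/\<zeta> * max ((u + v) \<bullet> h (u + v)) 0 + (4 * (2*\<kappa>\<^sup>2/\<zeta> + \<kappa>)/\<zeta> + 2) * (norm v)\<^sup>2"
proof -
  define K where "K = 2*\<kappa>\<^sup>2/\<zeta> + \<kappa>"
  define a b where "a = norm u" and "b = norm v"
  have bilinear_bound: "\<bar>p \<bullet> h q\<bar> \<le> \<kappa> * norm p * norm q" for p q
  proof -
    have "\<bar>p \<bullet> h q\<bar> \<le> norm p * norm (h q)"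
      by (rule Cauchy_Schwarz_ineq2)
    also have "\<dots> \<le> norm p * (\<kappa> * norm q)"
      by (simp add: assms(4) mult_left_mono)
    finally show ?thesis
      by (simp add: mult_ac)
  qed
  have "(u + v) \<bullet> h (u + v) = u \<bullet> h u + u \<bullet> h v + v \<bullet> h u + v \<bullet> h v"
    using \<open>linear h\<close> by (simp add: linear_add inner_add_left inner_add_right)
  moreover have "\<bar>u \<bullet> h v\<bar> \<le> \<kappa>*a*b" "\<bar>v \<bullet> h u\<bar> \<le> \<kappa>*a*b" "\<bar>v \<bullet> h v\<bar> \<le> \<kappa>*b\<^sup>2"
    using bilinear_bound[of u v] bilinear_bound[of v u] bilinear_bound[of v v]
    unfolding a_def b_def power2_eq_square by (simp_all add: mult_ac)
  moreover have "\<zeta> * a\<^sup>2 \<le> u \<bullet> h u"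
    using curv a_def by simp
  ultimately have lower: "(u + v) \<bullet> h (u + v) \<ge> \<zeta> * a\<^sup>2 - 2*\<kappa>*a*b - \<kappa>*b\<^sup>2"
    by linarith
  have "2*\<kappa>*a*b \<le> \<zeta>/2 * a\<^sup>2 + 2*\<kappa>\<^sup>2/\<zeta> * b\<^sup>2"
  proof -
    have "\<zeta> * (2*\<kappa>*a*b) * 2 \<le> \<zeta> * (\<zeta> * a\<^sup>2) + 4*\<kappa>\<^sup>2*b\<^sup>2"
      using zero_le_power2[of "\<zeta>*a - 2*\<kappa>*b"] by (simp add: power2_eq_square algebra_simps)
    then show ?thesis
      using \<open>\<zeta> > 0\<close> by (simp add: field_simps power2_eq_square)
  qed
  with lower have "\<zeta>/2 * a\<^sup>2 \<le> max ((u + v) \<bullet> h (u + v)) 0 + K * b\<^sup>2"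
    unfolding K_def distrib_right by linarith
  then have a_sq: "a\<^sup>2 \<le> 2/\<zeta> * (max ((u + v) \<bullet> h (u + v)) 0 + K * b\<^sup>2)"
    using \<open>\<zeta> > 0\<close> by (simp add: field_simps)
  have "(norm (u + v))\<^sup>2 \<le> (a + b)\<^sup>2"
    unfolding a_def b_def by (simp add: norm_triangle_ineq power_mono)
  also have "\<dots> \<le> 2*a\<^sup>2 + 2*b\<^sup>2"
    using zero_le_power2[of "a - b"] by (simp add: power2_eq_square algebra_simps)
  also have "\<dots> \<le> 2 * (2/\<zeta> * (max ((u + v) \<bullet> h (u + v)) 0 + K * b\<^sup>2)) + 2*b\<^sup>2"
    using a_sq by linarith
  also have "\<dots> = 4/\<zeta> * max ((u + v) \<bullet> h (u + v)) 0 + (4*K/\<zeta> + 2) * b\<^sup>2"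
    by (simp add: algebra_simps)
  finally show ?thesis
    unfolding K_def b_def .
qed

lemma norm_sq_le_curvature_constraint:
  fixes A :: "real^'n^'m" and H :: "real^'n^'n"
  assumes s: "s > 0" "\<And>v. s * norm v \<le> norm (transpose A *v v)"
    and constraint: "A *v d = - r" and r_bdd: "norm r \<le> B"
    and "\<zeta> > 0" "\<kappa> \<ge> 0" and H_bdd: "onorm (\<lambda>v. H *v v) \<le> \<kappa>"
    and H_curv: "\<And>u. A *v u = 0 \<Longrightarrow> \<zeta> * (norm u)\<^sup>2 \<le> u \<bullet> (H *v u)"
  shows "(norm d)\<^sup>2
    \<le> 4/\<zeta> * max (d \<bullet> (H *v d)) 0 + (4 * (2*\<kappa>\<^sup>2/\<zeta> + \<kappa>)/\<zeta> + 2) * B / s\<^sup>2 * norm r"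
proof -
  obtain u w where d: "d = u + transpose A *v w" and null: "A *v u = 0"
    by (rule null_range_decomposition)
  define v where "v = transpose A *v w"
  have "A *v v = - r"
    using constraint null by (simp add: d v_def matrix_vector_right_distrib)
  then have "s * norm v \<le> norm r"
    using norm_transpose_range_le[OF s(2), of w] by (simp add: v_def)
  then have "norm v \<le> norm r / s"
    using s(1) by (simp add: field_simps)
  then have "(norm v)\<^sup>2 \<le> (norm r / s)\<^sup>2"
    by (simp add: power_mono)
  also have "\<dots> \<le> B * norm r / s\<^sup>2"
    using r_bdd by (simp add: power2_eq_square divide_right_mono mult_right_mono)
  finally have v_sq: "(norm v)\<^sup>2 \<le> B * norm r / s\<^sup>2" .
  have "norm (H *v z) \<le> \<kappa> * norm z" for z
    using onorm[OF matrix_vector_mul_bounded_linear, of H z] H_bdd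
    by (meson mult_right_mono norm_ge_zero order_trans)
  then have "(norm d)\<^sup>2
      \<le> 4/\<zeta> * max (d \<bullet> (H *v d)) 0 + (4 * (2*\<kappa>\<^sup>2/\<zeta> + \<kappa>)/\<zeta> + 2) * (norm v)\<^sup>2"
    unfolding d v_def[symmetric]
    by (rule norm_sq_le_curvature[OF matrix_vector_mul_linear \<open>\<zeta> > 0\<close> \<open>\<kappa> \<ge> 0\<close> _ H_curv[OF null]])
  also have "\<dots> \<le> 4/\<zeta> * max (d \<bullet> (H *v d)) 0 + (4 * (2*\<kappa>\<^sup>2/\<zeta> + \<kappa>)/\<zeta> + 2) * (B * norm r / s\<^sup>2)"
    using v_sq \<open>\<zeta> > 0\<close> \<open>\<kappa> \<ge> 0\<close> by (intro add_left_mono mult_left_mono) auto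
  finally show ?thesis
    by simp
qed

lemma l1norm_nonneg: "0 \<le> l1norm v"
  unfolding l1norm_def by (simp add: sum_nonneg)

lemma norm_le_l1norm: "norm v \<le> l1norm v"
  unfolding l1norm_def by (rule norm_le_l1_cart)

lemma tau_update_bounds:
  fixes den :: real
  assumes "0 \<le> p" "0 \<le> eps" "eps \<le> 1" "0 \<le> cnorm1" "sgm \<le> 1"
  defines "t \<equiv> tau_update eps p (tau_trial sgm cnorm1 den)"
  shows "0 \<le> t \<and> t \<le> p \<and> t * den \<le> (1 - sgm) * cnorm1"
proof (cases "den \<le> 0")
  case True
  then have "t = p"
    by (simp add: t_def tau_update_def tau_trial_def)
  moreover have "p * den \<le> 0"
    using True assms(1) by (simp add: mult_nonneg_nonpos)
  moreover have "0 \<le> (1 - sgm) * cnorm1"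
    using assms by simp
  ultimately show ?thesis
    using assms(1) by auto
next
  case False
  define r where "r = (1 - sgm) * cnorm1 / den"
  have "0 \<le> r"
    using False assms by (simp add: r_def)
  moreover have "t = (if p \<le> r then p else min ((1 - eps) * p) r)"
    using False by (simp add: t_def tau_update_def tau_trial_def r_def)
  ultimately have "0 \<le> t" "t \<le> p" "t \<le> r"
    using assms by (auto simp: mult_le_cancel_right1)
  moreover have "r * den = (1 - sgm) * cnorm1"
    using False by (simp add: r_def)
  ultimately show ?thesis
    using False by (metis mult_right_mono not_le order_less_imp_le)
qed

context
  fixes c J x0 tau_m1 alpha_max alpha0 eps_f gamma theta sgm eps_tau fplus fzero H g d y tau alpha x
  assumes run: "ss_sqp c J x0 tau_m1 alpha_max alpha0 eps_f gamma theta sgm eps_tau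
    fplus fzero H g d y tau alpha x"
begin

lemma ss_sqp_constraint: "J (x k) *v d k = - c (x k)"
  using run unfolding ss_sqp_def by blast

lemma ss_sqp_tau_eq:
  "tau k = tau_update eps_tau (if k = 0 then tau_m1 else tau (k - 1))
     (tau_trial sgm (l1norm (c (x k))) (g k \<bullet> d k + max (d k \<bullet> (H k *v d k)) 0))"
  using run unfolding ss_sqp_def by blast

lemma ss_sqp_tau_step:
  assumes "0 \<le> eps_tau" "eps_tau \<le> 1" "sgm \<le> 1"
    and prev: "0 \<le> (if k = 0 then tau_m1 else tau (k - 1))"
  shows "0 \<le> tau k" "tau k \<le> (if k = 0 then tau_m1 else tau (k - 1))"
    and "tau k * (g k \<bullet> d k + max (d k \<bullet> (H k *v d k)) 0) \<le> (1 - sgm) * l1norm (c (x k))"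
  using tau_update_bounds[OF prev assms(1,2) l1norm_nonneg[of "c (x k)"] assms(3),
      where den = "g k \<bullet> d k + max (d k \<bullet> (H k *v d k)) 0"]
  unfolding ss_sqp_tau_eq[of k, symmetric] by auto

lemma ss_sqp_tau_bounds:
  assumes "0 < tau_m1" "0 \<le> eps_tau" "eps_tau \<le> 1" "sgm \<le> 1"
  shows "0 \<le> tau k \<and> tau k \<le> tau_m1"
proof (induction k)
  case 0
  then show ?case
    using ss_sqp_tau_step[OF assms(2-4), of 0] assms(1) by simp
next
  case (Suc k)
  then show ?case
    using ss_sqp_tau_step[OF assms(2-4), of "Suc k"] by simp
qed

lemma ss_sqp_Delta_l_ge:
  assumes "0 < tau_m1" "0 \<le> eps_tau" "eps_tau \<le> 1" "sgm \<le> 1"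
  shows "tau k * max (d k \<bullet> (H k *v d k)) 0 + sgm * l1norm (c (x k))
    \<le> Delta_l c (x k) (tau k) (g k) (d k)"
proof -
  have "0 \<le> (if k = 0 then tau_m1 else tau (k - 1))"
    using ss_sqp_tau_bounds[OF assms] assms(1) by simp
  from ss_sqp_tau_step(3)[OF assms(2-4) this] show ?thesis
    unfolding Delta_l_def by (simp add: algebra_simps)
qed

end

lemma le_scaled_merit_reduction:
  fixes t t_max m r nd a K sgm \<Delta> :: real
  assumes "0 \<le> t" "t \<le> t_max" "0 \<le> m" "0 \<le> r" "0 < a" "0 \<le> K" "0 < sgm"
    and nd: "nd \<le> a * m + K * r" and \<Delta>: "t * m + sgm * r \<le> \<Delta>"
  shows "t * (nd + r) / max a (t_max * (K + 1) / sgm) \<le> \<Delta>"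
proof -
  define C where "C = max a (t_max * (K + 1) / sgm)"
  have "C > 0"
    using \<open>0 < a\<close> by (simp add: C_def less_max_iff_disj)
  have "t * (nd + r) \<le> a * (t * m) + t * (K + 1) * r"
    using mult_left_mono[OF nd \<open>0 \<le> t\<close>] by (simp add: algebra_simps)
  also have "\<dots> \<le> C * (t * m) + t_max * (K + 1) * r"
    using assms by (intro add_mono mult_right_mono) (auto simp: C_def)
  also have "\<dots> \<le> C * (t * m) + C * sgm * r"
  proof -
    have "t_max * (K + 1) / sgm \<le> C"
      by (simp add: C_def)
    then have "t_max * (K + 1) \<le> C * sgm"
      using \<open>0 < sgm\<close> by (simp add: divide_le_eq)
    then show ?thesis
      using \<open>0 \<le> r\<close> by (intro add_left_mono mult_right_mono)
  qed
  also have "\<dots> \<le> C * \<Delta>"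
    using mult_left_mono[OF \<Delta>] \<open>C > 0\<close> by (simp add: algebra_simps)
  finally show ?thesis
    using \<open>C > 0\<close> by (simp add: C_def divide_le_eq mult.commute)
qed

theorem lemma3p12:
  fixes f :: "real^'n \<Rightarrow> real" and gradf :: "real^'n \<Rightarrow> real^'n"
    and c :: "real^'n \<Rightarrow> real^'m" and J :: "real^'n \<Rightarrow> real^'n^'m"
    and X :: "(real^'n) set"
    and x0 :: "real^'n"
    and tau_m1 alpha_max alpha0 eps_f gamma theta sgm eps_tau kappa_H zeta :: real
    and fplus fzero :: "'w \<Rightarrow> nat \<Rightarrow> real"
    and H :: "'w \<Rightarrow> nat \<Rightarrow> real^'n^'n"
    and g d x :: "'w \<Rightarrow> nat \<Rightarrow> real^'n"
    and y :: "'w \<Rightarrow> nat \<Rightarrow> real^'m"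
    and tau alpha :: "'w \<Rightarrow> nat \<Rightarrow> real"
  assumes dims: "CARD('m) \<le> CARD('n)"
    and f_deriv: "\<And>z. (f has_derivative (\<lambda>h. gradf z \<bullet> h)) (at z)"
    and gradf_cont: "continuous_on UNIV gradf"
    and c_deriv: "\<And>z. (c has_derivative (\<lambda>h. J z *v h)) (at z)"
    and J_cont: "continuous_on UNIV J"
    \<comment> \<open>parameters of the algorithm\<close>
    and tau_m1_pos: "tau_m1 > 0"
    and alpha_max: "0 < alpha_max" "alpha_max \<le> 1"
    and alpha0: "0 < alpha0" "alpha0 \<le> alpha_max"
    and eps_f: "eps_f \<ge> 0"
    and gamma: "0 < gamma" "gamma < 1"
    and theta: "0 < theta" "theta < 1"
    and sgm: "0 < sgm" "sgm < 1"
    and eps_tau: "0 < eps_tau" "eps_tau < 1"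
    \<comment> \<open>every realization w is a run of SS-SQP\<close>
    and run: "\<And>w. ss_sqp c J x0 tau_m1 alpha_max alpha0 eps_f gamma theta sgm eps_tau
                (fplus w) (fzero w) (H w) (g w) (d w) (y w) (tau w) (alpha w) (x w)"
    \<comment> \<open>(A1)\<close>
    and X_open: "open X" and X_convex: "convex X"
    and X_iterates: "\<And>w k. x w k \<in> X"
    and X_trial: "\<And>w k. x w k + alpha w k *\<^sub>R d w k \<in> X"
    and f_bdd: "bdd_below (f ` X)"
    and gradf_lip: "\<exists>L. \<forall>a\<in>X. \<forall>b\<in>X. norm (gradf a - gradf b) \<le> L * norm (a - b)"
    and gradf_bdd: "bounded (gradf ` X)"
    and c_bdd: "bounded (c ` X)"
    and gradc_lip: "\<And>i. \<exists>L. \<forall>a\<in>X. \<forall>b\<in>X. norm (J a $ i - J b $ i) \<le> L * norm (a - b)"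
    and gradc_bdd: "\<And>i. bounded ((\<lambda>z. J z $ i) ` X)"
    and sing_vals: "\<exists>s>0. \<forall>z\<in>X. \<forall>v. s * norm v \<le> norm (transpose (J z) *v v)"
    \<comment> \<open>(A2)\<close>
    and kappa_H: "kappa_H > 0" and zeta: "zeta > 0"
    and H_sym: "\<And>w k. transpose (H w k) = H w k"
    and H_bdd: "\<And>w k. onorm (\<lambda>v. H w k *v v) \<le> kappa_H"
    and H_pd_null: "\<And>w k u. J (x w k) *v u = 0 \<Longrightarrow> zeta * (norm u)\<^sup>2 \<le> u \<bullet> (H w k *v u)"
  shows "\<exists>kappa_l > 0. \<forall>w k.
           Delta_l c (x w k) (tau w k) (g w k) (d w k)
             \<ge> kappa_l * tau w k * ((norm (d w k))\<^sup>2 + norm (c (x w k)))"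
proof -
  obtain s where s: "s > 0" "\<And>z v. z \<in> X \<Longrightarrow> s * norm v \<le> norm (transpose (J z) *v v)"
    using sing_vals by blast
  obtain B where "B > 0" and B: "\<And>z. z \<in> X \<Longrightarrow> norm (c z) \<le> B"
    using c_bdd unfolding bounded_pos by auto
  define K where "K = (4 * (2*kappa_H\<^sup>2/zeta + kappa_H)/zeta + 2) * B / s\<^sup>2"
  define C where "C = max (4/zeta) (tau_m1 * (K + 1) / sgm)"
  have "K \<ge> 0"
    using \<open>B > 0\<close> kappa_H zeta by (simp add: K_def)
  have "C > 0"
    using zeta by (simp add: C_def less_max_iff_disj)
  have "tau w k * ((norm (d w k))\<^sup>2 + norm (c (x w k))) / C
      \<le> Delta_l c (x w k) (tau w k) (g w k) (d w k)" for w k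
  proof -
    have "(norm (d w k))\<^sup>2 \<le> 4/zeta * max (d w k \<bullet> (H w k *v d w k)) 0 + K * norm (c (x w k))"
      using norm_sq_le_curvature_constraint[OF s(1) s(2)[OF X_iterates] ss_sqp_constraint[OF run]
          B[OF X_iterates] zeta _ H_bdd H_pd_null] kappa_H
      by (simp add: K_def)
    moreover have "tau w k * max (d w k \<bullet> (H w k *v d w k)) 0 + sgm * norm (c (x w k))
        \<le> Delta_l c (x w k) (tau w k) (g w k) (d w k)"
      using ss_sqp_Delta_l_ge[OF run tau_m1_pos] eps_tau sgm norm_le_l1norm[of "c (x w k)"]
      by (smt (verit) mult_left_mono)
    ultimately show ?thesis
      unfolding C_def
      by (intro le_scaled_merit_reduction)
        (use ss_sqp_tau_bounds[OF run tau_m1_pos] eps_tau sgm zeta \<open>K \<ge> 0\<close> in auto)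
  qed
  with \<open>C > 0\<close> show ?thesis
    by (intro exI[of _ "1/C"]) auto
qed

end
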